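(* Let $f,g\in C[0,1]$. Then $$\underline{\dim}_B G(f\cdot g)\le \max\{\underline{\dim}_B G(f),\ \overline{\dim}_B G(g)\}.$$
   Context: $C[0,1]$ is the space of real-valued continuous functions on $[0,1]$; $G(f)=\{(x,f(x)):x\in[0,1]\}\subset\mathbb{R}^2$ is the graph of $f$; $f\cdot g$ is the pointwise product. For a nonempty bounded set $F$, $N_\delta(F)$ is the smallest number of sets of diameter at most $\delta$ covering $F$, $\overline{\dim}_B F=\limsup_{\delta\to0}\frac{\log N_\delta(F)}{-\log\delta}$ and $\underline{\dim}_B F=\liminf_{\delta\to0}\frac{\log N_\delta(F)}{-\log\delta}$. *)

theory Defs
  imports "HOL-Analysis.Analysis" "HOL-Library.Extended_Real"
begin

definition graph01 :: "(real \<Rightarrow> real) \<Rightarrow> (real \<times> real) set" where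
  "graph01 f = {(x, f x) | x. x \<in> {0..1}}"

definition cover_num :: "real \<Rightarrow> 'a::metric_space set \<Rightarrow> nat" where
  "cover_num \<delta> F = (LEAST n. \<exists>U :: nat \<Rightarrow> 'a set.
      F \<subseteq> (\<Union>i<n. U i) \<and> (\<forall>i<n. \<forall>x\<in>U i. \<forall>y\<in>U i. dist x y \<le> \<delta>))"

definition upper_box_dim :: "'a::metric_space set \<Rightarrow> ereal" where
  "upper_box_dim F = Limsup (at_right 0) (\<lambda>\<delta>. ereal (ln (real (cover_num \<delta> F)) / - ln \<delta>))"

definition lower_box_dim :: "'a::metric_space set \<Rightarrow> ereal" where
  "lower_box_dim F = Liminf (at_right 0) (\<lambda>\<delta>. ereal (ln (real (cover_num \<delta> F)) / - ln \<delta>))"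

end

theory Submission
  imports Defs
begin

text \<open>Split [0,1] into columns of width \<open>w \<approx> \<delta>\<close>. Up to constant factors, the number of
  \<open>\<delta>\<close>-sets needed to cover the graph of a continuous \<open>\<phi>\<close> is the column sum
  \<open>\<Sum>\<^sub>k (osc\<^sub>k \<phi> / w + 1)\<close>: stacking squares over each column gives the upper bound, and
  picking graph points at heights spaced \<open>4w\<close> apart in every fourth column gives \<open>\<delta>\<close>-separated
  points, hence the lower bound. Since \<open>osc\<^sub>k (f g) \<le> M (osc\<^sub>k f + osc\<^sub>k g)\<close> for \<open>|f|, |g| \<le> M\<close>,
  this yields \<open>N\<^sub>\<delta>(G(f g)) \<le> C (N\<^sub>\<delta>(G f) + N\<^sub>\<delta>(G g)) \<le> 2C max (N\<^sub>\<delta>(G f)) (N\<^sub>\<delta>(G g))\<close>.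
  After taking logarithms and dividing by \<open>-log \<delta>\<close> the constant vanishes as \<open>\<delta> \<rightarrow> 0\<close>, and
  a lower limit of a maximum is at most the lower limit of one term or the upper limit of the other.\<close>

definition delta_cover :: "real \<Rightarrow> 'a::metric_space set \<Rightarrow> nat \<Rightarrow> bool" where
  "delta_cover \<delta> F n \<longleftrightarrow> (\<exists>U :: nat \<Rightarrow> 'a set.
      F \<subseteq> (\<Union>i<n. U i) \<and> (\<forall>i<n. \<forall>x\<in>U i. \<forall>y\<in>U i. dist x y \<le> \<delta>))"

lemma cover_num_eq_Least: "cover_num \<delta> F = (LEAST n. delta_cover \<delta> F n)"
  unfolding cover_num_def delta_cover_def by simp

lemma cover_num_le: "delta_cover \<delta> F n \<Longrightarrow> cover_num \<delta> F \<le> n"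
  unfolding cover_num_eq_Least by (rule Least_le)

lemma delta_cover_cover_num: "delta_cover \<delta> F n \<Longrightarrow> delta_cover \<delta> F (cover_num \<delta> F)"
  unfolding cover_num_eq_Least by (rule LeastI)

lemma cover_num_pos: "delta_cover \<delta> F n \<Longrightarrow> F \<noteq> {} \<Longrightarrow> 0 < cover_num \<delta> F"
  using delta_cover_cover_num[of \<delta> F n] unfolding delta_cover_def by (auto intro: gr0I)

lemma delta_cover_subset: "delta_cover \<delta> B n \<Longrightarrow> A \<subseteq> B \<Longrightarrow> delta_cover \<delta> A n"
  unfolding delta_cover_def by blast

lemma delta_cover_Un:
  assumes "delta_cover \<delta> A a" "delta_cover \<delta> B b"
  shows "delta_cover \<delta> (A \<union> B) (a + b)"
proof -
  obtain U where U: "A \<subseteq> (\<Union>i<a. U i)" "\<forall>i<a. \<forall>x\<in>U i. \<forall>y\<in>U i. dist x y \<le> \<delta>"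
    using assms(1) unfolding delta_cover_def by blast
  obtain V where V: "B \<subseteq> (\<Union>i<b. V i)" "\<forall>i<b. \<forall>x\<in>V i. \<forall>y\<in>V i. dist x y \<le> \<delta>"
    using assms(2) unfolding delta_cover_def by blast
  define W where "W i = (if i < a then U i else V (i - a))" for i
  have "A \<subseteq> (\<Union>i<a+b. W i)"
    using U(1) unfolding W_def by (force simp: subset_iff)
  moreover have "B \<subseteq> (\<Union>i<a+b. W i)"
  proof
    fix z assume "z \<in> B"
    then obtain i where "i < b" "z \<in> V i" using V(1) by blast
    then show "z \<in> (\<Union>i<a+b. W i)" unfolding W_def by (intro UN_I[of "i + a"]) auto
  qed
  moreover have "\<forall>i<a+b. \<forall>x\<in>W i. \<forall>y\<in>W i. dist x y \<le> \<delta>"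
    using U(2) V(2) unfolding W_def by (metis add_diff_inverse_nat add_less_imp_less_left)
  ultimately show ?thesis unfolding delta_cover_def by blast
qed

lemma delta_cover_UN:
  fixes m :: nat
  shows "(\<And>k. k < m \<Longrightarrow> delta_cover \<delta> (S k) (c k)) \<Longrightarrow> delta_cover \<delta> (\<Union>k<m. S k) (\<Sum>k<m. c k)"
proof (induction m)
  case 0
  then show ?case by (simp add: delta_cover_def)
next
  case (Suc m)
  then show ?case by (simp add: lessThan_Suc Un_commute delta_cover_Un)
qed

lemma delta_cover_rectangle:
  fixes x0 y0 w L :: real
  assumes "0 < w" "0 \<le> L" "2 * w \<le> \<delta>"
  shows "delta_cover \<delta> ({x0..x0+w} \<times> {y0..y0+L}) (nat \<lfloor>L / w\<rfloor> + 1)"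
proof -
  define U where "U j = {x0..x0+w} \<times> {y0 + real j * w .. y0 + (real j + 1) * w}" for j :: nat
  have "{x0..x0+w} \<times> {y0..y0+L} \<subseteq> (\<Union>j<nat \<lfloor>L / w\<rfloor> + 1. U j)"
  proof safe
    fix a b assume a: "a \<in> {x0..x0+w}" and b: "b \<in> {y0..y0+L}"
    define j where "j = nat \<lfloor>(b - y0) / w\<rfloor>"
    have q: "0 \<le> (b - y0) / w" using b assms by auto
    have "\<lfloor>(b - y0) / w\<rfloor> \<le> \<lfloor>L / w\<rfloor>"
      using b assms by (intro floor_mono divide_right_mono) auto
    then have "j < nat \<lfloor>L / w\<rfloor> + 1" unfolding j_def by linarith
    moreover have "real j \<le> (b - y0) / w" "(b - y0) / w < real j + 1"
      unfolding j_def using q by linarith+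
    then have "y0 + real j * w \<le> b" "b \<le> y0 + (real j + 1) * w"
      using assms(1) by (simp_all add: field_simps)
    ultimately show "(a, b) \<in> (\<Union>j<nat \<lfloor>L / w\<rfloor> + 1. U j)" using a unfolding U_def by auto
  qed
  moreover have "dist p q \<le> \<delta>" if "p \<in> U j" "q \<in> U j" for p q j
  proof -
    have "\<bar>fst p - fst q\<bar> \<le> w" "\<bar>snd p - snd q\<bar> \<le> w"
      using that unfolding U_def by (auto simp: mem_Times_iff abs_le_iff algebra_simps)
    moreover have "dist p q \<le> dist (fst p) (fst q) + dist (snd p) (snd q)"
      by (metis dist_Pair_Pair prod.collapse sqrt_sum_squares_le_sum_abs abs_of_nonneg zero_le_dist)
    ultimately show ?thesis using assms by (simp add: dist_real_def)
  qed
  ultimately show ?thesis unfolding delta_cover_def by blast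
qed

lemma card_le_delta_cover_if_separated:
  assumes "delta_cover \<delta> F n" "finite T" "\<And>i. i \<in> T \<Longrightarrow> p i \<in> F"
    and "\<And>i j. i \<in> T \<Longrightarrow> j \<in> T \<Longrightarrow> i \<noteq> j \<Longrightarrow> \<delta> < dist (p i) (p j)"
  shows "card T \<le> n"
proof -
  obtain U where U: "F \<subseteq> (\<Union>i<n. U i)" "\<forall>i<n. \<forall>x\<in>U i. \<forall>y\<in>U i. dist x y \<le> \<delta>"
    using assms(1) unfolding delta_cover_def by blast
  define c where "c i = (SOME l. l < n \<and> p i \<in> U l)" for i
  have c: "c i < n \<and> p i \<in> U (c i)" if "i \<in> T" for i
    unfolding c_def by (rule someI_ex) (use that assms(3) U(1) in blast)
  have "inj_on c T"
  proof (rule inj_onI, rule ccontr)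
    fix i j assume "i \<in> T" "j \<in> T" "c i = c j" "i \<noteq> j"
    then have "dist (p i) (p j) \<le> \<delta>" using c U(2) by metis
    then show False using assms(4) \<open>i \<in> T\<close> \<open>j \<in> T\<close> \<open>i \<noteq> j\<close> by force
  qed
  moreover have "c ` T \<subseteq> {..<n}" using c by auto
  ultimately show ?thesis using card_inj_on_le[of c T "{..<n}"] by simp
qed

definition osc :: "(real \<Rightarrow> real) \<Rightarrow> real set \<Rightarrow> real" where
  "osc \<phi> S = Sup (\<phi> ` S) - Inf (\<phi> ` S)"

lemma continuous_image_atLeastAtMost:
  fixes \<phi> :: "real \<Rightarrow> real"
  assumes "a \<le> b" "continuous_on {a..b} \<phi>"
  shows "\<phi> ` {a..b} = {Inf (\<phi> ` {a..b}) .. Sup (\<phi> ` {a..b})}"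
    and "Inf (\<phi> ` {a..b}) \<le> Sup (\<phi> ` {a..b})"
proof -
  obtain c d where "\<phi> ` {a..b} = {c..d}" "c \<le> d"
    using continuous_image_closed_interval[OF assms] by blast
  then show "\<phi> ` {a..b} = {Inf (\<phi> ` {a..b}) .. Sup (\<phi> ` {a..b})}"
    and "Inf (\<phi> ` {a..b}) \<le> Sup (\<phi> ` {a..b})" by simp_all
qed

lemma osc_nonneg: "a \<le> b \<Longrightarrow> continuous_on {a..b} \<phi> \<Longrightarrow> 0 \<le> osc \<phi> {a..b}"
  unfolding osc_def using continuous_image_atLeastAtMost(2) by fastforce

lemma abs_diff_le_osc:
  assumes "a \<le> b" "continuous_on {a..b} \<phi>" "x \<in> {a..b}" "y \<in> {a..b}"
  shows "\<bar>\<phi> x - \<phi> y\<bar> \<le> osc \<phi> {a..b}"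
proof -
  have "\<phi> x \<in> {Inf (\<phi> ` {a..b}) .. Sup (\<phi> ` {a..b})}" "\<phi> y \<in> {Inf (\<phi> ` {a..b}) .. Sup (\<phi> ` {a..b})}"
    using continuous_image_atLeastAtMost(1)[OF assms(1,2)] assms(3,4) by blast+
  then show ?thesis unfolding osc_def by (auto simp: abs_le_iff)
qed

lemma osc_mult_le:
  fixes f g :: "real \<Rightarrow> real"
  assumes "a \<le> b" "continuous_on {a..b} f" "continuous_on {a..b} g"
    and "\<And>x. x \<in> {a..b} \<Longrightarrow> \<bar>f x\<bar> \<le> M" "\<And>x. x \<in> {a..b} \<Longrightarrow> \<bar>g x\<bar> \<le> M"
  shows "osc (\<lambda>x. f x * g x) {a..b} \<le> M * (osc f {a..b} + osc g {a..b})"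
proof -
  let ?S = "{a..b}" and ?h = "\<lambda>x. f x * g x"
  note image_h = continuous_image_atLeastAtMost[OF assms(1) continuous_on_mult[OF assms(2,3)]]
  obtain x1 where x1: "x1 \<in> ?S" "?h x1 = Sup (?h ` ?S)"
    using image_h by (metis (no_types, lifting) atLeastAtMost_iff imageE order_refl)
  obtain x2 where x2: "x2 \<in> ?S" "?h x2 = Inf (?h ` ?S)"
    using image_h by (metis (no_types, lifting) atLeastAtMost_iff imageE order_refl)
  have df: "\<bar>f x1 - f x2\<bar> \<le> osc f ?S" and dg: "\<bar>g x1 - g x2\<bar> \<le> osc g ?S"
    using x1(1) x2(1) assms(1-3) by (simp_all add: abs_diff_le_osc)
  have "osc ?h ?S = g x2 * (f x1 - f x2) + f x1 * (g x1 - g x2)"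
    unfolding osc_def x1(2)[symmetric] x2(2)[symmetric] by (simp add: algebra_simps)
  also have "\<dots> \<le> \<bar>g x2\<bar> * \<bar>f x1 - f x2\<bar> + \<bar>f x1\<bar> * \<bar>g x1 - g x2\<bar>"
    by (metis abs_ge_self abs_mult add_mono)
  also have "\<dots> \<le> M * osc f ?S + M * osc g ?S"
    using assms(4,5) x1(1) x2(1) df dg by (intro add_mono mult_mono) (auto intro: order_trans[OF abs_ge_zero])
  finally show ?thesis by (simp add: algebra_simps)
qed

definition grid_columns :: "real \<Rightarrow> nat set" where
  "grid_columns w = {..<nat \<lceil>1 / w\<rceil>}"

definition grid_column :: "real \<Rightarrow> nat \<Rightarrow> real set" where
  "grid_column w k = {real k * w .. min ((real k + 1) * w) 1}"

lemma finite_grid_columns [simp]: "finite (grid_columns w)"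
  by (simp add: grid_columns_def)

lemma grid_column_ordered:
  assumes "0 < w" "k \<in> grid_columns w"
  shows "real k * w \<le> min ((real k + 1) * w) 1"
proof -
  have "int k < \<lceil>1 / w\<rceil>"
    using assms(2) unfolding grid_columns_def lessThan_iff by linarith
  then have "real k < 1 / w" by (simp add: less_ceiling_iff)
  then show ?thesis using assms(1) by (simp add: field_simps)
qed

lemma grid_column_subset: "0 \<le> w \<Longrightarrow> grid_column w k \<subseteq> {0..1}"
  by (auto simp: grid_column_def)

lemma continuous_on_grid_column:
  "continuous_on {0..1} \<phi> \<Longrightarrow> 0 \<le> w \<Longrightarrow> continuous_on (grid_column w k) \<phi>"
  using grid_column_subset continuous_on_subset by blast

lemma ex_grid_column:
  assumes "0 < w" "x \<in> {0..1}"
  shows "\<exists>k\<in>grid_columns w. x \<in> grid_column w k"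
proof -
  define m where "m = nat \<lceil>1 / w\<rceil>"
  have "0 < \<lceil>1 / w\<rceil>" using assms(1) by simp
  then have "1 / w \<le> real m" "0 < m"
    unfolding m_def by linarith+
  define k where "k = min (nat \<lfloor>x / w\<rfloor>) (m - 1)"
  have "real k \<le> x / w"
    using assms unfolding k_def by (simp add: min_def) linarith
  moreover have "x / w \<le> real k + 1"
  proof (cases "nat \<lfloor>x / w\<rfloor> \<le> m - 1")
    case True
    then show ?thesis using assms unfolding k_def by (simp add: min_def)
  next
    case False
    then have "real k + 1 = real m" using \<open>0 < m\<close> unfolding k_def by simp
    moreover have "x / w \<le> 1 / w" using assms by (simp add: divide_right_mono)
    ultimately show ?thesis using \<open>1 / w \<le> real m\<close> by linarith
  qed
  ultimately have "x \<in> grid_column w k"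
    using assms by (simp add: grid_column_def field_simps)
  moreover have "k \<in> grid_columns w"
    using \<open>0 < m\<close> unfolding k_def grid_columns_def m_def[symmetric] by simp
  ultimately show ?thesis by blast
qed

definition column_sum :: "(real \<Rightarrow> real) \<Rightarrow> real \<Rightarrow> real" where
  "column_sum \<phi> w = (\<Sum>k\<in>grid_columns w. osc \<phi> (grid_column w k) / w + 1)"

lemma osc_grid_column_nonneg:
  "continuous_on {0..1} \<phi> \<Longrightarrow> 0 < w \<Longrightarrow> k \<in> grid_columns w \<Longrightarrow> 0 \<le> osc \<phi> (grid_column w k)"
  using grid_column_ordered continuous_on_grid_column osc_nonneg
  by (metis grid_column_def order_less_imp_le)

lemma image_grid_column:
  assumes "continuous_on {0..1} \<phi>" "0 < w" "k \<in> grid_columns w"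
  shows "\<phi> ` grid_column w k
    = {Inf (\<phi> ` grid_column w k) .. Inf (\<phi> ` grid_column w k) + osc \<phi> (grid_column w k)}"
  using continuous_image_atLeastAtMost(1)[OF grid_column_ordered[OF assms(2,3)], of \<phi>]
    continuous_on_grid_column[OF assms(1), of w k] assms(2)
  unfolding osc_def grid_column_def by simp

lemma delta_cover_graph01:
  assumes "continuous_on {0..1} \<phi>" "0 < w" "2 * w \<le> \<delta>"
  shows "delta_cover \<delta> (graph01 \<phi>) (\<Sum>k\<in>grid_columns w. nat \<lfloor>osc \<phi> (grid_column w k) / w\<rfloor> + 1)"
proof -
  define lo where "lo k = Inf (\<phi> ` grid_column w k)" for k
  define R where "R k = {real k * w .. real k * w + w} \<times> {lo k .. lo k + osc \<phi> (grid_column w k)}" for k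
  have "graph01 \<phi> \<subseteq> (\<Union>k\<in>grid_columns w. R k)"
  proof
    fix p assume "p \<in> graph01 \<phi>"
    then obtain x where x: "p = (x, \<phi> x)" "x \<in> {0..1}" unfolding graph01_def by auto
    obtain k where k: "k \<in> grid_columns w" "x \<in> grid_column w k" using ex_grid_column[OF assms(2) x(2)] by blast
    have "\<phi> ` grid_column w k = {lo k .. lo k + osc \<phi> (grid_column w k)}"
      unfolding lo_def by (rule image_grid_column[OF assms(1,2) k(1)])
    then have "p \<in> R k" using k(2) x(1) unfolding R_def by (auto simp: grid_column_def algebra_simps)
    then show "p \<in> (\<Union>k\<in>grid_columns w. R k)" using k(1) by blast
  qed
  moreover have "delta_cover \<delta> (\<Union>k\<in>grid_columns w. R k) (\<Sum>k\<in>grid_columns w. nat \<lfloor>osc \<phi> (grid_column w k) / w\<rfloor> + 1)"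
    unfolding grid_columns_def
    by (intro delta_cover_UN, unfold R_def, intro delta_cover_rectangle assms osc_grid_column_nonneg)
      (simp add: grid_columns_def)
  ultimately show ?thesis by (rule delta_cover_subset[rotated])
qed

lemma cover_num_graph01_le_column_sum:
  assumes "continuous_on {0..1} \<phi>" "0 < w" "2 * w \<le> \<delta>"
  shows "real (cover_num \<delta> (graph01 \<phi>)) \<le> column_sum \<phi> w"
proof -
  have "real (cover_num \<delta> (graph01 \<phi>)) \<le> (\<Sum>k\<in>grid_columns w. real (nat \<lfloor>osc \<phi> (grid_column w k) / w\<rfloor> + 1))"
    using cover_num_le[OF delta_cover_graph01[OF assms]] by (metis of_nat_le_iff of_nat_sum)
  also have "\<dots> \<le> column_sum \<phi> w"
    unfolding column_sum_def
    using osc_grid_column_nonneg[OF assms(1,2)] assms(2) by (intro sum_mono) simp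
  finally show ?thesis .
qed

lemma cover_num_graph01_pos:
  assumes "continuous_on {0..1} \<phi>" "0 < \<delta>"
  shows "0 < cover_num \<delta> (graph01 \<phi>)"
proof -
  have "(0, \<phi> 0) \<in> graph01 \<phi>" unfolding graph01_def by auto
  then show ?thesis
    using assms by (intro cover_num_pos[OF delta_cover_graph01[OF assms(1), of "\<delta> / 2"]]) auto
qed

lemma mod_eq_imp_add_le:
  fixes k k' d :: nat
  assumes "k mod d = k' mod d" "k \<noteq> k'"
  shows "k + d \<le> k' \<or> k' + d \<le> k"
proof -
  have k: "k = d * (k div d) + k mod d" and k': "k' = d * (k' div d) + k mod d"
    using mult_div_mod_eq[of d k] mult_div_mod_eq[of d k'] assms(1) by simp_all
  then have "k div d \<noteq> k' div d" using assms(2) by metis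
  then have "d * (k div d) + d \<le> d * (k' div d) \<or> d * (k' div d) + d \<le> d * (k div d)"
    by (metis linorder_neqE_nat Suc_le_eq mult_le_mono2 mult_Suc_right add.commute)
  then show ?thesis using k k' by linarith
qed

lemma grid_column_dist_ge:
  assumes "0 \<le> w" "k mod d = k' mod d" "k \<noteq> k'" "x \<in> grid_column w k" "x' \<in> grid_column w k'"
  shows "(real d - 1) * w \<le> \<bar>x - x'\<bar>"
proof -
  have "real k + real d \<le> real k' \<or> real k' + real d \<le> real k"
    using mod_eq_imp_add_le[OF assms(2,3)] by linarith
  then have "(real k + real d) * w \<le> real k' * w \<or> (real k' + real d) * w \<le> real k * w"
    using assms(1) by (auto intro: mult_right_mono)
  then show ?thesis
    using assms(4,5) unfolding grid_column_def by (auto simp: algebra_simps abs_if)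
qed

lemma ex_grid_column_value:
  assumes "continuous_on {0..1} \<phi>" "0 < w" "k \<in> grid_columns w"
    and "0 \<le> t" "t \<le> osc \<phi> (grid_column w k)"
  shows "\<exists>x\<in>grid_column w k. \<phi> x = Inf (\<phi> ` grid_column w k) + t"
proof -
  have "Inf (\<phi> ` grid_column w k) + t
      \<in> {Inf (\<phi> ` grid_column w k) .. Inf (\<phi> ` grid_column w k) + osc \<phi> (grid_column w k)}"
    using assms(4,5) by simp
  then have "Inf (\<phi> ` grid_column w k) + t \<in> \<phi> ` grid_column w k"
    using image_grid_column[OF assms(1-3)] by metis
  then show ?thesis by (metis imageE)
qed

text \<open>Within one column the points differ in height by at least \<open>4w\<close>; columns of the same
  residue mod 4 are at least \<open>3w\<close> apart.\<close>
lemma graph_points_separated: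
  fixes \<phi> :: "real \<Rightarrow> real"
  assumes "0 < w" "\<delta> < 3 * w" "x \<in> grid_column w k" "x' \<in> grid_column w k'" "k mod 4 = k' mod 4"
    and "\<phi> x = c k + real j * (4 * w)" "\<phi> x' = c k' + real j' * (4 * w)" "(k, j) \<noteq> (k', j')"
  shows "\<delta> < dist (x, \<phi> x) (x', \<phi> x')"
proof (cases "k = k'")
  case True
  then have "j \<noteq> j'" using assms(8) by simp
  then have "4 * w \<le> \<bar>(real j - real j') * (4 * w)\<bar>" using assms(1) by (simp add: abs_mult)
  also have "\<dots> = \<bar>\<phi> x - \<phi> x'\<bar>"
    using assms(6,7) True by (simp add: algebra_simps)
  also have "\<dots> \<le> dist (x, \<phi> x) (x', \<phi> x')"
    using dist_snd_le[of "(x, \<phi> x)" "(x', \<phi> x')"] by (simp add: dist_real_def)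
  finally show ?thesis using assms(1,2) by linarith
next
  case False
  have "(real 4 - 1) * w \<le> \<bar>x - x'\<bar>"
    using assms(1,3-5) by (intro grid_column_dist_ge[OF _ _ False]) auto
  also have "\<dots> \<le> dist (x, \<phi> x) (x', \<phi> x')"
    using dist_fst_le[of "(x, \<phi> x)" "(x', \<phi> x')"] by (simp add: dist_real_def)
  finally show ?thesis using assms(2) by simp
qed

lemma residue_column_sum_le_delta_cover:
  assumes "continuous_on {0..1} \<phi>" "0 < w" "\<delta> < 3 * w" "delta_cover \<delta> (graph01 \<phi>) n"
  shows "(\<Sum>k | k \<in> grid_columns w \<and> k mod 4 = r. nat \<lfloor>osc \<phi> (grid_column w k) / (4 * w)\<rfloor> + 1) \<le> n"
proof -
  define K where "K = {k. k \<in> grid_columns w \<and> k mod 4 = r}"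
  define J where "J k = {..nat \<lfloor>osc \<phi> (grid_column w k) / (4 * w)\<rfloor>}" for k
  have "\<exists>x \<in> grid_column w k. \<phi> x = Inf (\<phi> ` grid_column w k) + real j * (4 * w)"
    if "(k, j) \<in> Sigma K J" for k j
  proof (rule ex_grid_column_value[OF assms(1,2)])
    from that show k: "k \<in> grid_columns w" unfolding K_def by simp
    have "0 \<le> osc \<phi> (grid_column w k) / (4 * w)"
      using osc_grid_column_nonneg[OF assms(1,2) k] assms(2) by simp
    then have "real j \<le> osc \<phi> (grid_column w k) / (4 * w)"
      using that unfolding J_def by simp linarith
    then show "real j * (4 * w) \<le> osc \<phi> (grid_column w k)"
      using assms(2) by (simp add: field_simps)
  qed (use assms(2) in simp)
  then obtain x where x: "\<And>k j. (k, j) \<in> Sigma K J \<Longrightarrow>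
      x k j \<in> grid_column w k \<and> \<phi> (x k j) = Inf (\<phi> ` grid_column w k) + real j * (4 * w)"
    by metis
  have "card (Sigma K J) \<le> n"
  proof (rule card_le_delta_cover_if_separated[OF assms(4)])
    show "finite (Sigma K J)" unfolding K_def J_def by auto
    show "(\<lambda>(k, j). (x k j, \<phi> (x k j))) i \<in> graph01 \<phi>" if "i \<in> Sigma K J" for i
      using x that grid_column_subset[of w] assms(2) unfolding graph01_def by fastforce
    show "\<delta> < dist ((\<lambda>(k, j). (x k j, \<phi> (x k j))) i) ((\<lambda>(k, j). (x k j, \<phi> (x k j))) i')"
      if "i \<in> Sigma K J" "i' \<in> Sigma K J" "i \<noteq> i'" for i i'
    proof -
      obtain k j k' j' where i: "i = (k, j)" and i': "i' = (k', j')" by fastforce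
      show ?thesis
        using that x[of k j] x[of k' j'] assms(2,3) unfolding i i' K_def prod.case
        by (intro graph_points_separated[where c = "\<lambda>k. Inf (\<phi> ` grid_column w k)"]) auto
    qed
  qed
  then show ?thesis unfolding K_def J_def by (simp add: card_SigmaI)
qed

lemma column_sum_le_delta_cover:
  assumes "continuous_on {0..1} \<phi>" "0 < w" "\<delta> < 3 * w" "delta_cover \<delta> (graph01 \<phi>) n"
  shows "column_sum \<phi> w \<le> 20 * real n"
proof -
  define a where "a k = nat \<lfloor>osc \<phi> (grid_column w k) / (4 * w)\<rfloor> + 1" for k
  have "(\<Sum>k\<in>grid_columns w. a k) = (\<Sum>r<4. \<Sum>k | k \<in> grid_columns w \<and> k mod 4 = r. a k)"
    by (rule sum.group[symmetric]) auto
  also have "\<dots> \<le> (\<Sum>r<(4::nat). n)"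
    unfolding a_def by (intro sum_mono residue_column_sum_le_delta_cover[OF assms])
  finally have "(\<Sum>k\<in>grid_columns w. real (a k)) \<le> 4 * real n"
    by (metis of_nat_le_iff of_nat_sum of_nat_mult of_nat_numeral sum_constant card_lessThan)
  moreover have "osc \<phi> (grid_column w k) / w + 1 \<le> 5 * real (a k)" if "k \<in> grid_columns w" for k
  proof -
    have "osc \<phi> (grid_column w k) / (4 * w) < real (a k)"
      unfolding a_def using osc_grid_column_nonneg[OF assms(1,2) that] assms(2) by linarith
    then have "osc \<phi> (grid_column w k) / w < 4 * real (a k)"
      using assms(2) by (simp add: field_simps)
    moreover have "1 \<le> real (a k)" unfolding a_def by simp
    ultimately show ?thesis by linarith
  qed
  then have "column_sum \<phi> w \<le> 5 * (\<Sum>k\<in>grid_columns w. real (a k))"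
    unfolding column_sum_def sum_distrib_left by (rule sum_mono)
  ultimately show ?thesis by linarith
qed

lemma column_sum_mult_le:
  fixes f g :: "real \<Rightarrow> real"
  assumes "continuous_on {0..1} f" "continuous_on {0..1} g" "0 < w" "0 \<le> M"
    and "\<And>x. x \<in> {0..1} \<Longrightarrow> \<bar>f x\<bar> \<le> M" "\<And>x. x \<in> {0..1} \<Longrightarrow> \<bar>g x\<bar> \<le> M"
  shows "column_sum (\<lambda>x. f x * g x) w \<le> (M + 1) * (column_sum f w + column_sum g w)"
  unfolding column_sum_def sum_distrib_left sum.distrib[symmetric]
proof (rule sum_mono)
  fix k assume k: "k \<in> grid_columns w"
  let ?C = "grid_column w k"
  have "\<bar>f x\<bar> \<le> M" "\<bar>g x\<bar> \<le> M" if "x \<in> ?C" for x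
    using that grid_column_subset[of w k] assms(3,5,6) by auto
  then have "osc (\<lambda>x. f x * g x) ?C \<le> M * (osc f ?C + osc g ?C)"
    using grid_column_ordered[OF assms(3) k] continuous_on_grid_column[OF assms(1), of w k]
      continuous_on_grid_column[OF assms(2), of w k] assms(3)
    unfolding grid_column_def by (intro osc_mult_le) auto
  then have "osc (\<lambda>x. f x * g x) ?C / w \<le> M * (osc f ?C + osc g ?C) / w"
    using assms(3) by (simp add: divide_right_mono)
  also have "\<dots> = M * (osc f ?C / w + osc g ?C / w)"
    using assms(3) by (simp add: field_simps)
  finally have "osc (\<lambda>x. f x * g x) ?C / w \<le> M * (osc f ?C / w + osc g ?C / w)" .
  moreover have "0 \<le> osc f ?C / w" "0 \<le> osc g ?C / w"
    using osc_grid_column_nonneg[OF assms(1,3) k] osc_grid_column_nonneg[OF assms(2,3) k] assms(3) by simp_all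
  moreover have "h + 1 \<le> (M + 1) * ((a + 1) + (b + 1))"
    if "h \<le> M * (a + b)" "0 \<le> a" "0 \<le> b" for h a b :: real
    using that assms(4) by (simp add: algebra_simps)
  ultimately show "osc (\<lambda>x. f x * g x) ?C / w + 1
      \<le> (M + 1) * ((osc f ?C / w + 1) + (osc g ?C / w + 1))"
    by blast
qed

lemma cover_num_graph01_mult_le:
  fixes f g :: "real \<Rightarrow> real"
  assumes f: "continuous_on {0..1} f" and g: "continuous_on {0..1} g" and "0 < \<delta>" "0 \<le> M"
    and "\<And>x. x \<in> {0..1} \<Longrightarrow> \<bar>f x\<bar> \<le> M" "\<And>x. x \<in> {0..1} \<Longrightarrow> \<bar>g x\<bar> \<le> M"
  shows "real (cover_num \<delta> (graph01 (\<lambda>x. f x * g x)))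
    \<le> 20 * (M + 1) * (real (cover_num \<delta> (graph01 f)) + real (cover_num \<delta> (graph01 g)))"
proof -
  define w where "w = \<delta> / 2"
  have w: "0 < w" "2 * w \<le> \<delta>" "\<delta> < 3 * w" using assms(3) unfolding w_def by auto
  have cover: "delta_cover \<delta> (graph01 \<phi>) (cover_num \<delta> (graph01 \<phi>))"
    if "continuous_on {0..1} \<phi>" for \<phi>
    using delta_cover_cover_num[OF delta_cover_graph01[OF that w(1,2)]] .
  have "real (cover_num \<delta> (graph01 (\<lambda>x. f x * g x))) \<le> column_sum (\<lambda>x. f x * g x) w"
    using f g w by (intro cover_num_graph01_le_column_sum continuous_on_mult)
  also have "\<dots> \<le> (M + 1) * (column_sum f w + column_sum g w)"
    using assms by (intro column_sum_mult_le w)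
  also have "\<dots> \<le> (M + 1) * (20 * real (cover_num \<delta> (graph01 f)) + 20 * real (cover_num \<delta> (graph01 g)))"
    using assms(4) f g w cover[OF f] cover[OF g]
    by (intro mult_left_mono add_mono column_sum_le_delta_cover) auto
  finally show ?thesis by (simp add: algebra_simps)
qed

lemma Liminf_le_max_Liminf_Limsup:
  fixes rh rf rg e :: "'a \<Rightarrow> real"
  assumes "\<forall>\<^sub>F x in F. rh x \<le> e x + max (rf x) (rg x)" and "(e \<longlongrightarrow> 0) F"
  shows "Liminf F (\<lambda>x. ereal (rh x))
    \<le> max (Liminf F (\<lambda>x. ereal (rf x))) (Limsup F (\<lambda>x. ereal (rg x)))"
    (is "?H \<le> max ?F ?G")
proof (rule ccontr)
  assume "\<not> ?H \<le> max ?F ?G"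
  then obtain z where z: "max ?F ?G < ereal z" "ereal z < ?H"
    using ereal_dense2[of "max ?F ?G" ?H] by (auto simp: not_le)
  obtain z' where z': "max ?F ?G < ereal z'" "z' < z"
    using ereal_dense2[OF z(1)] by auto
  have "\<forall>\<^sub>F x in F. z < rh x"
    using less_LiminfD[OF z(2)] by simp
  moreover have "\<forall>\<^sub>F x in F. rg x < z'"
    using Limsup_lessD[of F "\<lambda>x. ereal (rg x)" "ereal z'"] z'(1) by simp
  moreover have "\<forall>\<^sub>F x in F. \<bar>e x\<bar> < z - z'"
    using tendstoD[OF assms(2), of "z - z'"] z'(2) by (simp add: dist_real_def)
  ultimately have "\<forall>\<^sub>F x in F. ereal z' \<le> ereal (rf x)"
    using assms(1)
  proof eventually_elim
    case (elim x)
    have "z' < max (rf x) (rg x)" using elim(1,3,4) unfolding abs_less_iff by linarith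
    then show ?case using elim(2) by (simp add: less_max_iff_disj)
  qed
  then have "ereal z' \<le> ?F" by (rule Liminf_bounded)
  then show False using z'(1) by (meson max.strict_boundedE not_le)
qed

lemma tendsto_div_neg_ln_at_right_0: "((\<lambda>\<delta>. K / - ln \<delta>) \<longlongrightarrow> 0) (at_right (0::real))"
proof (rule tendsto_divide_0[OF tendsto_const])
  have "filterlim (\<lambda>\<delta>::real. - ln \<delta>) at_top (at_right 0)"
    using filterlim_compose[OF filterlim_uminus_at_top_at_bot ln_at_0] .
  then show "filterlim (\<lambda>\<delta>::real. - ln \<delta>) at_infinity (at_right 0)"
    by (rule filterlim_at_top_imp_at_infinity)
qed

lemma ln_div_le_of_le_mult_add:
  fixes a b c C L :: real
  assumes "0 < L" "1 \<le> a" "1 \<le> b" "0 < c" "0 < C" "c \<le> C * (a + b)"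
  shows "ln c / L \<le> ln (2 * C) / L + max (ln a / L) (ln b / L)"
proof -
  have "C * (a + b) \<le> C * (2 * max a b)"
    using assms(5) by (intro mult_left_mono) auto
  then have "c \<le> (2 * C) * max a b" using assms(6) by simp
  then have "ln c \<le> ln ((2 * C) * max a b)" using assms by (subst ln_le_cancel_iff) auto
  also have "\<dots> = ln (2 * C) + max (ln a) (ln b)" using assms by (simp add: ln_mult max_def)
  finally have "ln c / L \<le> (ln (2 * C) + max (ln a) (ln b)) / L"
    using assms(1) by (intro divide_right_mono) auto
  then show ?thesis
    using assms(1) by (simp add: add_divide_distrib max_divide_distrib_right)
qed

theorem proposition3p6:
  fixes f g :: "real \<Rightarrow> real"
  assumes "continuous_on {0..1} f" and "continuous_on {0..1} g"
  shows "lower_box_dim (graph01 (\<lambda>x. f x * g x))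
           \<le> max (lower_box_dim (graph01 f)) (upper_box_dim (graph01 g))"
proof -
  have "bounded (f ` {0..1} \<union> g ` {0..1})"
    unfolding bounded_Un using assms by (intro conjI compact_imp_bounded compact_continuous_image) auto
  then obtain M where M: "0 < M" "\<And>x. x \<in> {0..1} \<Longrightarrow> \<bar>f x\<bar> \<le> M \<and> \<bar>g x\<bar> \<le> M"
    unfolding bounded_pos by auto
  define C where "C = 20 * (M + 1)"
  let ?r = "\<lambda>\<phi> \<delta>. ln (real (cover_num \<delta> (graph01 \<phi>))) / - ln \<delta>"
  have "\<forall>\<^sub>F \<delta> in at_right 0. 0 < \<delta> \<and> \<delta> < (1::real)"
    by (rule eventually_at_rightI[of 0 1]) auto
  then have "\<forall>\<^sub>F \<delta> in at_right 0. ?r (\<lambda>x. f x * g x) \<delta> \<le> ln (2 * C) / - ln \<delta> + max (?r f \<delta>) (?r g \<delta>)"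
  proof eventually_elim
    case (elim \<delta>)
    then show ?case
      using cover_num_graph01_pos[OF assms(1), of \<delta>] cover_num_graph01_pos[OF assms(2), of \<delta>]
        cover_num_graph01_pos[OF continuous_on_mult[OF assms], of \<delta>] M
        cover_num_graph01_mult_le[OF assms, of \<delta> M]
      by (intro ln_div_le_of_le_mult_add) (auto simp: C_def)
  qed
  then show ?thesis unfolding lower_box_dim_def upper_box_dim_def
    by (rule Liminf_le_max_Liminf_Limsup[OF _ tendsto_div_neg_ln_at_right_0])
qed

end
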